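(* Let $\eta\in\mathcal D$. Then for every $x_0\in\mathbb U$ the negative gradient flow $\dot x(t)=-\nabla\eta(x(t))$, $x(0)=x_0$, has a unique global solution and $x(t)\in\mathbb U$ for all $t\ge0$.
   Context: Let $\zeta_{\min}>0$, $\beta\ge2$ an integer, $y_1,\dots,y_N\in\mathbb R^D$. $\mathbb U:=\bigcup_{i=1}^NB(y_i,\zeta_{\min}/2)$ (open Euclidean balls). For $x\in\partial\mathbb U$, $\vec n(x):=\{(x-y_i)/\|x-y_i\|:\|x-y_i\|=\zeta_{\min}/2\}$. $\mathcal D$ is the set of $\eta\in C^\beta(\overline{\mathbb U})$ with $\|\nabla\eta(x)\|^2=2\eta(x)$ for all $x\in\mathbb U$, and such that there is $\delta>0$ with $\langle\nabla\eta(x),n\rangle>\delta$ for all $x\in\partial\mathbb U$, $n\in\vec n(x)$. *)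

theory Defs
  imports "HOL-Analysis.Analysis"
begin

definition ballunion :: "real \<Rightarrow> nat \<Rightarrow> (nat \<Rightarrow> 'a::euclidean_space) \<Rightarrow> 'a set" where
  "ballunion \<zeta> N ys = (\<Union>i\<in>{1..N}. ball (ys i) (\<zeta> / 2))"

text \<open>F vs is the iterated partial derivative along the directions in vs, F (b # vs) being the
partial derivative in direction b of F vs.\<close>
definition Ck_closure :: "nat \<Rightarrow> 'a::euclidean_space set \<Rightarrow> ('a \<Rightarrow> real) \<Rightarrow> bool" where
  "Ck_closure k U f \<longleftrightarrow> (\<exists>F :: 'a list \<Rightarrow> 'a \<Rightarrow> real.
      (\<forall>x\<in>closure U. F [] x = f x) \<and>
      (\<forall>vs. set vs \<subseteq> Basis \<and> length vs \<le> k \<longrightarrow> continuous_on (closure U) (F vs)) \<and>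
      (\<forall>vs. set vs \<subseteq> Basis \<and> length vs < k \<longrightarrow>
         (\<forall>x\<in>U. (F vs has_derivative (\<lambda>h. \<Sum>b\<in>Basis. (h \<bullet> b) * F (b # vs) x)) (at x))))"

definition grad :: "('a::euclidean_space \<Rightarrow> real) \<Rightarrow> 'a \<Rightarrow> 'a" where
  "grad f x = (SOME g. (f has_derivative (\<lambda>h. g \<bullet> h)) (at x))"

text \<open>Gradient on the closure of U: the continuous extension from U.  For x in the open
set U this is just grad f x (when f is C^1).\<close>
definition ext_grad :: "'a::euclidean_space set \<Rightarrow> ('a \<Rightarrow> real) \<Rightarrow> 'a \<Rightarrow> 'a" where
  "ext_grad U f x = Lim (at x within U) (grad f)"

definition classD :: "real \<Rightarrow> nat \<Rightarrow> nat \<Rightarrow> (nat \<Rightarrow> 'a::euclidean_space) \<Rightarrow> ('a \<Rightarrow> real) \<Rightarrow> bool" where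
  "classD \<zeta> \<beta> N ys \<eta> \<longleftrightarrow>
     Ck_closure \<beta> (ballunion \<zeta> N ys) \<eta> \<and>
     (\<forall>x\<in>ballunion \<zeta> N ys. (norm (ext_grad (ballunion \<zeta> N ys) \<eta> x))\<^sup>2 = 2 * \<eta> x) \<and>
     (\<exists>\<delta>>0. \<forall>x\<in>frontier (ballunion \<zeta> N ys). \<forall>i\<in>{1..N}. dist x (ys i) = \<zeta> / 2 \<longrightarrow>
         ext_grad (ballunion \<zeta> N ys) \<eta> x \<bullet> ((x - ys i) /\<^sub>R norm (x - ys i)) > \<delta>)"

definition neg_grad_flow_sol ::
  "'a::euclidean_space set \<Rightarrow> ('a \<Rightarrow> real) \<Rightarrow> 'a \<Rightarrow> (real \<Rightarrow> 'a) \<Rightarrow> bool" where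
  "neg_grad_flow_sol U \<eta> x0 x \<longleftrightarrow> x 0 = x0 \<and>
     (\<forall>t\<ge>0. x t \<in> closure U \<and>
        (x has_vector_derivative - ext_grad U \<eta> (x t)) (at t within {0..}))"

end

theory Submission
  imports Defs
begin

(* Differentiating the eikonal equation |grad eta|^2 = 2 eta and using the symmetry of the
   Hessian H gives H (grad eta) = grad eta.  Hence along the flow d/dt grad eta (x) = - grad eta (x),
   so grad eta (x t) = exp (-t) grad eta (x0) and the solution is the straight segment
   x t = x0 - (1 - exp (-t)) grad eta (x0); for any solution staying in U, exp t grad eta (x t) is
   constant, which gives uniqueness.  The segment cannot leave U: at a first exit time T it lies on
   a sphere of radius zeta/2 around some y_i on which grad eta, hence grad eta (x0), points strictly
   outward, so shortly before T the segment was already outside that ball. *)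

lemma vanishing_if_derivative_norm_bounded:
  fixes v v' :: "real \<Rightarrow> 'a::real_inner"
  assumes v0: "v 0 = 0"
    and deriv: "\<And>s. s \<in> {0..T} \<Longrightarrow> (v has_vector_derivative v' s) (at s)"
    and bounded: "\<And>s. s \<in> {0..T} \<Longrightarrow> norm (v' s) \<le> C * norm (v s)"
    and t: "t \<in> {0..T}"
  shows "v t = 0"
proof -
  define f where "f s = exp (- 2 * C * s) * (v s \<bullet> v s)" for s
  have "f t \<le> f 0"
  proof (rule DERIV_nonpos_imp_nonincreasing[of 0 t f])
    fix s assume "0 \<le> s" "s \<le> t"
    then have s: "s \<in> {0..T}" using t by auto
    have "(f has_real_derivative exp (- 2 * C * s) * (2 * (v s \<bullet> v' s) - 2 * C * (v s \<bullet> v s))) (at s)"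
      using deriv[OF s] unfolding f_def has_vector_derivative_def has_field_derivative_def
      by (auto intro!: derivative_eq_intros elim!: has_derivative_eq_rhs
          simp: algebra_simps inner_commute)
    moreover have "v s \<bullet> v' s \<le> C * (v s \<bullet> v s)"
    proof -
      have "v s \<bullet> v' s \<le> norm (v s) * norm (v' s)" by (rule norm_cauchy_schwarz)
      also have "\<dots> \<le> norm (v s) * (C * norm (v s))" by (simp add: bounded[OF s] mult_left_mono)
      finally show ?thesis by (simp add: power2_norm_eq_inner[symmetric] power2_eq_square mult_ac)
    qed
    ultimately show "\<exists>y. (f has_real_derivative y) (at s) \<and> y \<le> 0"
      by (auto intro!: mult_nonneg_nonpos)
  qed (use t in simp)
  then have "v t \<bullet> v t \<le> 0" using v0 by (simp add: f_def mult_le_0_iff)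
  then show "v t = 0" using inner_ge_zero[of "v t"] by simp
qed

lemma has_vector_derivative_zero_imp_eq:
  fixes f :: "real \<Rightarrow> 'a::real_normed_vector"
  assumes "\<And>s. s \<in> {a..b} \<Longrightarrow> (f has_vector_derivative 0) (at s within {a..b})"
    and "t \<in> {a..b}"
  shows "f t = f a"
proof -
  obtain c where "\<And>s. s \<in> {a..b} \<Longrightarrow> f s = c"
    using has_vector_derivative_zero_constant[OF convex_real_interval(5) assms(1)] by blast
  then show ?thesis using assms(2) by auto
qed

lemma continuous_stays_in_open:
  fixes f :: "real \<Rightarrow> 'a::topological_space"
  assumes cont: "continuous_on {0..} f" and "open U" "f 0 \<in> U"
    and step: "\<And>T. 0 < T \<Longrightarrow> (\<And>t. t \<in> {0..<T} \<Longrightarrow> f t \<in> U) \<Longrightarrow> f T \<in> U"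
    and "0 \<le> t"
  shows "f t \<in> U"
proof (rule ccontr)
  define S where "S = {0..} \<inter> f -` (- U)"
  assume "f t \<notin> U"
  then have "S \<noteq> {}" using \<open>0 \<le> t\<close> by (auto simp: S_def)
  moreover have bdd: "bdd_below S" unfolding S_def by (auto intro: bdd_belowI[of _ 0])
  moreover have "closed S"
    unfolding S_def using cont \<open>open U\<close> by (intro continuous_closed_preimage) auto
  ultimately have "Inf S \<in> S" by (rule closed_contains_Inf)
  then have "0 \<le> Inf S" "f (Inf S) \<notin> U" by (auto simp: S_def)
  moreover have "f t \<in> U" if "t \<in> {0..<Inf S}" for t
    using that cInf_lower[OF _ bdd, of t] by (force simp: S_def)
  ultimately show False using step \<open>f 0 \<in> U\<close> by (metis le_less)
qed

lemma linear_family_bounded_on_compact: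
  fixes D :: "'a::topological_space \<Rightarrow> 'b::euclidean_space \<Rightarrow> 'c::real_normed_vector"
  assumes "compact K" and lin: "\<And>q. q \<in> K \<Longrightarrow> linear (D q)"
    and cont: "\<And>b. b \<in> Basis \<Longrightarrow> continuous_on K (\<lambda>q. D q b)"
  shows "\<exists>M. \<forall>q\<in>K. \<forall>h. norm (D q h) \<le> M * norm h"
proof -
  define m where "m q = (\<Sum>b\<in>Basis. norm (D q b))" for q
  have "continuous_on K m" unfolding m_def using cont by (auto intro!: continuous_intros)
  then have "bounded (m ` K)" using \<open>compact K\<close> by (intro compact_imp_bounded compact_continuous_image)
  then obtain M where M: "\<And>q. q \<in> K \<Longrightarrow> norm (m q) \<le> M" unfolding bounded_iff by auto
  have "norm (D q h) \<le> M * norm h" if q: "q \<in> K" for q h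
  proof -
    have "D q h = D q (\<Sum>b\<in>Basis. (h \<bullet> b) *\<^sub>R b)" by (simp only: euclidean_representation)
    also have "\<dots> = (\<Sum>b\<in>Basis. (h \<bullet> b) *\<^sub>R D q b)"
      by (simp only: linear_sum[OF lin[OF q]] linear_scale[OF lin[OF q]])
    also have "norm \<dots> \<le> (\<Sum>b\<in>Basis. norm h * norm (D q b))"
      by (rule order_trans[OF norm_sum sum_mono]) (auto intro!: mult_right_mono Basis_le_norm)
    also have "\<dots> = norm h * m q" by (simp add: m_def sum_distrib_left)
    also have "\<dots> \<le> norm h * M" using M[OF q] by (intro mult_left_mono) auto
    finally show ?thesis by (simp add: mult.commute)
  qed
  then show ?thesis by blast
qed

lemma mean_value_parallel_segments:
  fixes f :: "'a::real_inner \<Rightarrow> real" and g :: "'a \<Rightarrow> 'a"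
  assumes grad: "\<And>x. x \<in> U \<Longrightarrow> (f has_derivative (\<lambda>h. g x \<bullet> h)) (at x)"
    and segments: "\<And>s. s \<in> {0..1} \<Longrightarrow> p + s *\<^sub>R w \<in> U \<and> p' + s *\<^sub>R w \<in> U"
  obtains z where "z \<in> {0..1}"
    "f (p + w) - f p - (f (p' + w) - f p') = (g (p + z *\<^sub>R w) - g (p' + z *\<^sub>R w)) \<bullet> w"
proof -
  have along: "((\<lambda>s. f (x + s *\<^sub>R w)) has_derivative (\<lambda>h. g (x + s *\<^sub>R w) \<bullet> (h *\<^sub>R w))) (at s)"
    if "x + s *\<^sub>R w \<in> U" for x s
  proof -
    have "((\<lambda>s. x + s *\<^sub>R w) has_derivative (\<lambda>h. h *\<^sub>R w)) (at s)"
      by (auto intro!: derivative_eq_intros)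
    from has_derivative_compose[OF this grad[OF that]] show ?thesis .
  qed
  define \<phi> where "\<phi> s = f (p + s *\<^sub>R w) - f (p' + s *\<^sub>R w)" for s
  define \<phi>' where "\<phi>' s = (g (p + s *\<^sub>R w) - g (p' + s *\<^sub>R w)) \<bullet> w" for s
  have "(\<phi> has_real_derivative \<phi>' s) (at s)" if "s \<in> {0..1}" for s
  proof -
    have "p + s *\<^sub>R w \<in> U" "p' + s *\<^sub>R w \<in> U" using segments[OF that] by auto
    from has_derivative_diff[OF along[OF this(1)] along[OF this(2)]] show ?thesis
      unfolding \<phi>_def \<phi>'_def has_field_derivative_def
      by (rule has_derivative_eq_rhs) (auto simp: inner_diff_left algebra_simps)
  qed
  then obtain z where "0 < z" "z < 1" "\<phi> 1 - \<phi> 0 = (1 - 0) * \<phi>' z"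
    using MVT2[of 0 1 \<phi> \<phi>'] by auto
  then show thesis by (intro that[of z]) (auto simp: \<phi>_def \<phi>'_def)
qed

lemma second_difference_estimate:
  fixes f :: "'a::euclidean_space \<Rightarrow> real" and g D :: "'a \<Rightarrow> 'a"
  assumes grad: "\<And>p. p \<in> U \<Longrightarrow> (f has_derivative (\<lambda>h. g p \<bullet> h)) (at p)"
    and lin: "linear D"
    and approx: "\<And>y. norm (y - q) < d \<Longrightarrow> norm (g y - g q - D (y - q)) \<le> e * norm (y - q)"
    and ball: "ball q r \<subseteq> U"
    and t: "0 < t" "t * (norm a + norm b) < d" "t * (norm a + norm b) < r"
    and e: "0 \<le> e"
  shows "\<bar>f (q + t *\<^sub>R a + t *\<^sub>R b) - f (q + t *\<^sub>R b) - f (q + t *\<^sub>R a) + f q - t\<^sup>2 * (b \<bullet> D a)\<bar>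
      \<le> 2 * e * t\<^sup>2 * norm b * (norm a + norm b)"
proof -
  define P1 where "P1 s = q + t *\<^sub>R a + s *\<^sub>R (t *\<^sub>R b)" for s
  define P2 where "P2 s = q + s *\<^sub>R (t *\<^sub>R b)" for s
  have near: "norm (P1 s - q) \<le> t * (norm a + norm b)" "norm (P2 s - q) \<le> t * (norm a + norm b)"
    if "s \<in> {0..1}" for s
  proof -
    have "norm (P1 s - q) \<le> norm (t *\<^sub>R a) + norm ((s * t) *\<^sub>R b)"
      using norm_triangle_ineq[of "t *\<^sub>R a" "(s * t) *\<^sub>R b"] by (simp add: P1_def)
    also have "\<dots> \<le> t * norm a + t * norm b"
      using that t(1) by (auto simp: abs_mult intro!: mult_left_le_one_le mult_right_mono)
    finally show "norm (P1 s - q) \<le> t * (norm a + norm b)" by (simp add: algebra_simps)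
    have "norm (P2 s - q) \<le> t * norm b"
      using that t(1) by (auto simp: P2_def intro!: mult_left_le_one_le mult_right_mono)
    also have "\<dots> \<le> t * (norm a + norm b)" using t(1) by simp
    finally show "norm (P2 s - q) \<le> t * (norm a + norm b)" .
  qed
  have "P1 s \<in> U \<and> P2 s \<in> U" if "s \<in> {0..1}" for s
    using near[OF that] t(3) ball by (force simp: dist_norm norm_minus_commute)
  then obtain z where z: "z \<in> {0..1}" and mvt:
    "f (q + t *\<^sub>R a + t *\<^sub>R b) - f (q + t *\<^sub>R a) - (f (q + t *\<^sub>R b) - f q)
      = (g (P1 z) - g (P2 z)) \<bullet> (t *\<^sub>R b)"
    using mean_value_parallel_segments[OF grad, where p = "q + t *\<^sub>R a" and w = "t *\<^sub>R b" and p' = q]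
    unfolding P1_def P2_def by auto
  define E where "E y = g y - g q - D (y - q)" for y
  have "D (P1 z - q) - D (P2 z - q) = t *\<^sub>R D a"
    unfolding P1_def P2_def by (simp add: linear_add[OF lin] linear_scale[OF lin])
  then have "(g (P1 z) - g (P2 z)) \<bullet> (t *\<^sub>R b) - t\<^sup>2 * (b \<bullet> D a) = (t *\<^sub>R b) \<bullet> (E (P1 z) - E (P2 z))"
    unfolding E_def by (simp add: algebra_simps inner_diff_right inner_commute power2_eq_square)
  also have "\<bar>\<dots>\<bar> \<le> norm (t *\<^sub>R b) * (norm (E (P1 z)) + norm (E (P2 z)))"
    by (rule order_trans[OF Cauchy_Schwarz_ineq2]) (simp add: mult_left_mono norm_triangle_ineq4)
  also have "\<dots> \<le> (t * norm b) * (e * (t * (norm a + norm b)) + e * (t * (norm a + norm b)))"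
  proof (intro mult_mono add_mono)
    show "norm (E (P1 z)) \<le> e * (t * (norm a + norm b))" "norm (E (P2 z)) \<le> e * (t * (norm a + norm b))"
      using approx[of "P1 z"] approx[of "P2 z"] near[OF z] t e
      unfolding E_def by (smt (verit) mult_left_mono)+
  qed (use t e in auto)
  also have "\<dots> = 2 * e * t\<^sup>2 * norm b * (norm a + norm b)"
    by (simp add: power2_eq_square algebra_simps)
  finally show ?thesis using mvt by (simp add: algebra_simps)
qed

lemma hessian_symmetric:
  fixes f :: "'a::euclidean_space \<Rightarrow> real" and g D :: "'a \<Rightarrow> 'a"
  assumes grad: "\<And>p. p \<in> U \<Longrightarrow> (f has_derivative (\<lambda>h. g p \<bullet> h)) (at p)"
    and "open U" "q \<in> U"
    and g_deriv: "(g has_derivative D) (at q)"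
  shows "a \<bullet> D b = b \<bullet> D a"
proof -
  have lin: "linear D" using g_deriv has_derivative_linear by blast
  obtain r where r: "r > 0" "ball q r \<subseteq> U" using assms(2,3) open_contains_ball by blast
  define K where "K = 2 * (norm a + norm b + 1)\<^sup>2"
  have K: "K > 0" unfolding K_def by (smt (verit) norm_ge_zero zero_less_power)
  have estimate: "\<bar>a \<bullet> D b - b \<bullet> D a\<bar> \<le> e * K" if e: "e > 0" for e
  proof -
    obtain d where d: "d > 0"
      "\<And>y. norm (y - q) < d \<Longrightarrow> norm (g y - g q - D (y - q)) \<le> e * norm (y - q)"
      using g_deriv e unfolding has_derivative_at_alt by blast
    define t where "t = min d r / (2 * (norm a + norm b + 1))"
    have t: "t > 0" using d r unfolding t_def by (smt (verit) norm_ge_zero divide_pos_pos)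
    have "t * (norm a + norm b) < t * (2 * (norm a + norm b + 1))"
      using t by (intro mult_strict_left_mono) (auto, smt (verit) norm_ge_zero)
    also have "\<dots> = min d r" unfolding t_def by (smt (verit) norm_ge_zero nonzero_eq_divide_eq)
    finally have small: "t * (norm a + norm b) < d" "t * (norm a + norm b) < r" by auto
    have "\<bar>f (q + t *\<^sub>R a + t *\<^sub>R b) - f (q + t *\<^sub>R b) - f (q + t *\<^sub>R a) + f q - t\<^sup>2 * (b \<bullet> D a)\<bar>
      \<le> 2 * e * t\<^sup>2 * norm b * (norm a + norm b)"
      using second_difference_estimate[OF grad lin d(2) r(2) t small] e by simp
    moreover have "\<bar>f (q + t *\<^sub>R a + t *\<^sub>R b) - f (q + t *\<^sub>R a) - f (q + t *\<^sub>R b) + f q - t\<^sup>2 * (a \<bullet> D b)\<bar>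
      \<le> 2 * e * t\<^sup>2 * norm a * (norm a + norm b)"
      using second_difference_estimate[OF grad lin d(2) r(2) t, where a=b and b=a] small e
      by (simp add: add.commute add.left_commute)
    ultimately have "\<bar>t\<^sup>2 * (a \<bullet> D b) - t\<^sup>2 * (b \<bullet> D a)\<bar>
      \<le> 2 * e * t\<^sup>2 * norm b * (norm a + norm b) + 2 * e * t\<^sup>2 * norm a * (norm a + norm b)"
      by linarith
    also have "\<dots> = t\<^sup>2 * (2 * e * (norm a + norm b)\<^sup>2)"
      by (simp add: power2_eq_square algebra_simps)
    also have "\<dots> \<le> t\<^sup>2 * (e * K)"
      unfolding K_def using e by (intro mult_left_mono) (auto intro!: power_mono)
    finally show ?thesis using t by (simp add: abs_mult right_diff_distrib[symmetric])
  qed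
  have "\<bar>a \<bullet> D b - b \<bullet> D a\<bar> \<le> 0 + e" if "e > 0" for e
    using estimate[of "e / K"] that K by simp
  then show ?thesis using field_le_epsilon[of "\<bar>a \<bullet> D b - b \<bullet> D a\<bar>" 0] by simp
qed

lemma eikonal_hessian_fixes_gradient:
  fixes f :: "'a::euclidean_space \<Rightarrow> real" and g :: "'a \<Rightarrow> 'a"
  assumes grad: "\<And>p. p \<in> U \<Longrightarrow> (f has_derivative (\<lambda>h. g p \<bullet> h)) (at p)"
    and U: "open U" "q \<in> U"
    and g_deriv: "(g has_derivative D) (at q)"
    and eikonal: "\<And>p. p \<in> U \<Longrightarrow> g p \<bullet> g p = 2 * f p"
  shows "D (g q) = g q"
proof -
  have "((\<lambda>p. 2 * f p) has_derivative (\<lambda>h. g q \<bullet> D h + D h \<bullet> g q)) (at q)"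
    using has_derivative_inner[OF g_deriv g_deriv]
    by (rule has_derivative_transform_within_open[OF _ U]) (simp add: eikonal)
  moreover have "((\<lambda>p. 2 * f p) has_derivative (\<lambda>h. 2 * (g q \<bullet> h))) (at q)"
    using grad[OF U(2)] by (auto intro!: derivative_eq_intros)
  ultimately have "g q \<bullet> D h + D h \<bullet> g q = 2 * (g q \<bullet> h)" for h
    by (metis has_derivative_unique)
  then have "h \<bullet> (D (g q) - g q) = 0" for h
    using hessian_symmetric[OF grad U g_deriv, of h "g q"] by (simp add: inner_commute inner_diff_right)
  from this[of "D (g q) - g q"] show ?thesis by simp
qed

lemma grad_eqI:
  assumes "(f has_derivative (\<lambda>h. g \<bullet> h)) (at x)"
  shows "grad f x = g"
proof -
  have "(f has_derivative (\<lambda>h. grad f x \<bullet> h)) (at x)"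
    unfolding grad_def using assms by (rule someI)
  then have "(\<lambda>h. grad f x \<bullet> h) = (\<lambda>h. g \<bullet> h)" using assms by (rule has_derivative_unique)
  then show ?thesis by (metis vector_eq_rdot)
qed

lemma ext_grad_eq_continuous_gradient:
  fixes f :: "'a::euclidean_space \<Rightarrow> real"
  assumes "open U" and grad: "\<And>q. q \<in> U \<Longrightarrow> (f has_derivative (\<lambda>h. g q \<bullet> h)) (at q)"
    and "continuous_on (closure U) g" "x \<in> closure U"
  shows "ext_grad U f x = g x"
proof -
  have "at x within U \<noteq> bot"
    using assms(1,4) by (simp add: trivial_limit_within) (metis islimpt_closure_open limpt_of_closure)
  moreover have "(g \<longlongrightarrow> g x) (at x within U)"
    using assms(3,4) closure_subset by (auto simp: continuous_on_def intro: tendsto_within_subset)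
  then have "(grad f \<longlongrightarrow> g x) (at x within U)"
    by (rule Lim_transform_eventually) (auto simp: eventually_at_filter grad_eqI[OF grad])
  ultimately show ?thesis unfolding ext_grad_def by (rule tendsto_Lim)
qed

lemma Ck_closure_second_derivative:
  fixes f :: "'a::euclidean_space \<Rightarrow> real"
  assumes "Ck_closure k U f" "2 \<le> k" "open U"
  obtains g Dg where
    "\<And>q. q \<in> U \<Longrightarrow> (f has_derivative (\<lambda>h. g q \<bullet> h)) (at q)"
    "\<And>q. q \<in> U \<Longrightarrow> (g has_derivative Dg q) (at q)"
    "\<And>h. continuous_on U (\<lambda>q. Dg q h)"
    "continuous_on (closure U) g"
proof -
  obtain F where F0: "\<forall>x\<in>closure U. F [] x = f x"
    and cont: "\<And>vs. set vs \<subseteq> Basis \<Longrightarrow> length vs \<le> k \<Longrightarrow> continuous_on (closure U) (F vs)"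
    and deriv: "\<And>vs x. set vs \<subseteq> Basis \<Longrightarrow> length vs < k \<Longrightarrow> x \<in> U \<Longrightarrow>
      (F vs has_derivative (\<lambda>h. \<Sum>b\<in>Basis. (h \<bullet> b) * F (b # vs) x)) (at x)"
    using assms(1) unfolding Ck_closure_def by blast
  define g where "g q = (\<Sum>b\<in>Basis. F [b] q *\<^sub>R b)" for q
  define Dg where "Dg q h = (\<Sum>b\<in>Basis. (\<Sum>c\<in>Basis. (h \<bullet> c) * F [c, b] q) *\<^sub>R b)" for q h
  have g_inner: "g q \<bullet> h = (\<Sum>b\<in>Basis. (h \<bullet> b) * F [b] q)" for q h
    unfolding g_def inner_sum_left by (rule sum.cong) (auto simp: inner_commute)
  show thesis
  proof
    fix q assume q: "q \<in> U"
    have "(F [] has_derivative (\<lambda>h. \<Sum>b\<in>Basis. (h \<bullet> b) * F [b] q)) (at q)"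
      using deriv[of "[]"] q assms(2) by simp
    then have "(f has_derivative (\<lambda>h. \<Sum>b\<in>Basis. (h \<bullet> b) * F [b] q)) (at q)"
      by (rule has_derivative_transform_within_open[OF _ assms(3) q]) (use F0 closure_subset in auto)
    then show "(f has_derivative (\<lambda>h. g q \<bullet> h)) (at q)"
      by (simp add: g_inner)
    have "(F [b] has_derivative (\<lambda>h. \<Sum>c\<in>Basis. (h \<bullet> c) * F [c, b] q)) (at q)" if "b \<in> Basis" for b
      using deriv[of "[b]"] q that assms(2) by simp
    then show "(g has_derivative Dg q) (at q)"
      unfolding g_def Dg_def by (intro has_derivative_sum has_derivative_scaleR_left)
  next
    fix h
    have "continuous_on U (F [c, b])" if "b \<in> Basis" "c \<in> Basis" for b c
      using cont[of "[c, b]"] that assms(2) closure_subset by (auto intro: continuous_on_subset)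
    then show "continuous_on U (\<lambda>q. Dg q h)"
      unfolding Dg_def by (auto intro!: continuous_intros)
  next
    show "continuous_on (closure U) g"
      unfolding g_def using cont[of "[b]" for b] assms(2) by (auto intro!: continuous_intros)
  qed
qed

lemma eventually_shift_outside_ball:
  fixes p v c :: "'a::real_inner"
  assumes "p \<notin> ball c r" and outward: "dist c p = r \<Longrightarrow> v \<bullet> (p - c) > 0"
  shows "\<forall>\<^sub>F s in at_right 0. p + s *\<^sub>R v \<notin> ball c r"
proof (cases "dist c p = r")
  case True
  have far: "r < dist c (p + s *\<^sub>R v)" if "s > 0" for s
  proof -
    have "(norm (p + s *\<^sub>R v - c))\<^sup>2 = (norm (p - c))\<^sup>2 + 2 * s * (v \<bullet> (p - c)) + s\<^sup>2 * (norm v)\<^sup>2"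
      unfolding power2_norm_eq_inner
      by (simp add: inner_add_left inner_add_right inner_diff_left inner_diff_right inner_commute
          algebra_simps power2_eq_square)
    also have "\<dots> > (norm (p - c))\<^sup>2"
      using that outward[OF True] by (smt (verit) mult_pos_pos zero_le_power2 mult_nonneg_nonneg)
    finally have "norm (p - c) < norm (p + s *\<^sub>R v - c)" by (simp add: power_less_imp_less_base)
    then show ?thesis using True by (simp add: dist_norm norm_minus_commute)
  qed
  show ?thesis
    using eventually_at_right_less[of "0::real"] by eventually_elim (use far in fastforce)
next
  case False
  then have "r < dist c p" using assms(1) by simp
  moreover have "((\<lambda>s. dist c (p + s *\<^sub>R v)) \<longlongrightarrow> dist c p) (at_right 0)"
    by (auto intro!: tendsto_eq_intros)
  ultimately have "\<forall>\<^sub>F s in at_right 0. r < dist c (p + s *\<^sub>R v)"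
    by (rule order_tendstoD(1)[rotated])
  then show ?thesis by eventually_elim simp
qed

lemma filterlim_exp_minus_diff_at_left:
  "filterlim (\<lambda>t. exp (- t) - exp (- T)) (at_right 0) (at_left (T::real))"
proof -
  have "((\<lambda>t. exp (- t) - exp (- T)) \<longlongrightarrow> exp (- T) - exp (- T)) (at_left T)"
    by (intro tendsto_intros)
  moreover have "\<forall>\<^sub>F t in at_left T. exp (- t) - exp (- T) > 0"
    by (simp add: eventually_at_filter)
  ultimately show ?thesis unfolding filterlim_at by (auto elim: eventually_mono)
qed

(* Dg_g is the eikonal equation g . g = 2 eta differentiated once
   (eikonal_hessian_fixes_gradient). *)
locale eikonal_field =
  fixes U :: "'a::euclidean_space set" and g :: "'a \<Rightarrow> 'a" and Dg :: "'a \<Rightarrow> 'a \<Rightarrow> 'a"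
  assumes open_U: "open U"
    and g_has_derivative: "\<And>q. q \<in> U \<Longrightarrow> (g has_derivative Dg q) (at q)"
    and Dg_continuous: "\<And>h. continuous_on U (\<lambda>q. Dg q h)"
    and Dg_g: "\<And>q. q \<in> U \<Longrightarrow> Dg q (g q) = g q"
begin

definition flow_line :: "'a \<Rightarrow> real \<Rightarrow> 'a" where
  "flow_line z t = z - (1 - exp (- t)) *\<^sub>R g z"

lemma flow_line_0 [simp]: "flow_line z 0 = z"
  by (simp add: flow_line_def)

lemma flow_line_has_vector_derivative:
  "(flow_line z has_vector_derivative - (exp (- t) *\<^sub>R g z)) (at t within S)"
  unfolding flow_line_def[abs_def] by (auto intro!: derivative_eq_intros)

lemma continuous_on_flow_line: "continuous_on S (flow_line z)"
  unfolding flow_line_def[abs_def] by (intro continuous_intros)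

lemma g_along_flow_line:
  assumes in_U: "flow_line z ` {0..T} \<subseteq> U" and t: "t \<in> {0..T}"
  shows "g (flow_line z t) = exp (- t) *\<^sub>R g z"
proof -
  have "compact (flow_line z ` {0..T})"
    by (intro compact_continuous_image continuous_on_flow_line compact_Icc)
  moreover have "linear (Dg q)" if "q \<in> flow_line z ` {0..T}" for q
    using g_has_derivative that in_U by (blast intro: has_derivative_linear)
  moreover have "continuous_on (flow_line z ` {0..T}) (\<lambda>q. Dg q h)" for h
    using Dg_continuous in_U by (rule continuous_on_subset)
  ultimately obtain M where M: "\<And>q h. q \<in> flow_line z ` {0..T} \<Longrightarrow> norm (Dg q h) \<le> M * norm h"
    using linear_family_bounded_on_compact by metis
  define v where "v s = g (flow_line z s) - exp (- s) *\<^sub>R g z" for s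
  (* by Dg_g, the derivative of v can be written in terms of v itself *)
  define v' where "v' s = Dg (flow_line z s) (v s) - v s" for s
  have "v t = 0"
  proof (rule vanishing_if_derivative_norm_bounded[where v' = v' and T = T and C = "M + 1"])
    fix s assume s: "s \<in> {0..T}"
    then have q: "flow_line z s \<in> U" using in_U by auto
    have lin: "linear (Dg (flow_line z s))" using g_has_derivative[OF q] by (rule has_derivative_linear)
    have "(g \<circ> flow_line z has_vector_derivative Dg (flow_line z s) (- (exp (- s) *\<^sub>R g z))) (at s)"
      by (rule vector_derivative_diff_chain_within[OF flow_line_has_vector_derivative
          has_derivative_at_withinI[OF g_has_derivative[OF q]]])
    moreover have "Dg (flow_line z s) (- (exp (- s) *\<^sub>R g z)) + exp (- s) *\<^sub>R g z = v' s"
      unfolding v'_def v_def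
      using Dg_g[OF q] linear_diff[OF lin] linear_neg[OF lin] linear_scale[OF lin] by simp
    ultimately show "(v has_vector_derivative v' s) (at s)"
      unfolding v_def o_def by (auto intro!: derivative_eq_intros)
    have "norm (v' s) \<le> norm (Dg (flow_line z s) (v s)) + norm (v s)"
      unfolding v'_def by (rule norm_triangle_ineq4)
    also have "\<dots> \<le> (M + 1) * norm (v s)" using M[of "flow_line z s" "v s"] s by (auto simp: algebra_simps)
    finally show "norm (v' s) \<le> (M + 1) * norm (v s)" .
  qed (use t in \<open>simp_all add: v_def\<close>)
  then show ?thesis by (simp add: v_def)
qed

lemma flow_line_solves_flow:
  assumes "\<And>s. 0 \<le> s \<Longrightarrow> flow_line z s \<in> U" and "0 \<le> t"
  shows "(flow_line z has_vector_derivative - g (flow_line z t)) (at t within S)"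
proof -
  have "flow_line z ` {0..t} \<subseteq> U" using assms(1) by auto
  then show ?thesis
    using flow_line_has_vector_derivative g_along_flow_line[of z t t] assms(2) by simp
qed

lemma solution_eq_flow_line_while_in_U:
  assumes y0: "y 0 = z"
    and deriv: "\<And>s. s \<in> {0..T} \<Longrightarrow> (y has_vector_derivative - g (y s)) (at s within {0..T})"
    and in_U: "y ` {0..T} \<subseteq> U" and t: "t \<in> {0..T}"
  shows "y t = flow_line z t"
proof -
  have exp_g_deriv: "((\<lambda>s. exp s *\<^sub>R g (y s)) has_vector_derivative 0) (at s within {0..T})"
    if s: "s \<in> {0..T}" for s
  proof -
    have q: "y s \<in> U" using in_U s by auto
    have "(g \<circ> y has_vector_derivative Dg (y s) (- g (y s))) (at s within {0..T})"
      by (rule vector_derivative_diff_chain_within[OF deriv[OF s]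
          has_derivative_at_withinI[OF g_has_derivative[OF q]]])
    moreover have "Dg (y s) (- g (y s)) = - g (y s)"
      using Dg_g[OF q] linear_neg[OF has_derivative_linear[OF g_has_derivative[OF q]]] by simp
    ultimately show ?thesis unfolding o_def by (auto intro!: derivative_eq_intros)
  qed
  have g_y: "g (y s) = exp (- s) *\<^sub>R g z" if "s \<in> {0..T}" for s
  proof -
    have "exp s *\<^sub>R g (y s) = g z"
      using has_vector_derivative_zero_imp_eq[OF exp_g_deriv that] y0 by simp
    then have "exp (- s) *\<^sub>R (exp s *\<^sub>R g (y s)) = exp (- s) *\<^sub>R g z" by simp
    then show ?thesis by (simp add: exp_add[symmetric])
  qed
  have diff_deriv: "((\<lambda>s. y s - flow_line z s) has_vector_derivative 0) (at s within {0..T})"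
    if "s \<in> {0..T}" for s
    using has_vector_derivative_diff[OF deriv[OF that] flow_line_has_vector_derivative[of z]]
    by (simp add: g_y[OF that])
  show ?thesis using has_vector_derivative_zero_imp_eq[OF diff_deriv t] y0 by simp
qed

lemma solution_eq_flow_line:
  assumes y0: "y 0 = z"
    and deriv: "\<And>s. 0 \<le> s \<Longrightarrow> (y has_vector_derivative - G (y s)) (at s within {0..})"
    and G: "\<And>q. q \<in> U \<Longrightarrow> G q = g q"
    and flow_in_U: "\<And>s. 0 \<le> s \<Longrightarrow> flow_line z s \<in> U"
    and t: "0 \<le> t"
  shows "y t = flow_line z t"
proof -
  have on_segment: "y s = flow_line z s" if "y ` {0..T} \<subseteq> U" "s \<in> {0..T}" for T s
  proof (rule solution_eq_flow_line_while_in_U[OF y0 _ that])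
    fix s assume s: "s \<in> {0..T}"
    then have "y s \<in> U" using that(1) by auto
    then show "(y has_vector_derivative - g (y s)) (at s within {0..T})"
      using has_vector_derivative_within_subset[OF deriv[of s], of "{0..T}"] G s by auto
  qed
  have cont: "continuous_on {0..} y"
    using has_vector_derivative_continuous[OF deriv] by (simp add: continuous_on_eq_continuous_within)
  have "y s \<in> U" if "0 \<le> s" for s
  proof (rule continuous_stays_in_open[OF cont open_U _ _ that])
    show "y 0 \<in> U" using flow_in_U[of 0] y0 by simp
    fix T :: real assume T: "0 < T" and before: "\<And>s. s \<in> {0..<T} \<Longrightarrow> y s \<in> U"
    have "continuous_on {0..T} y" using cont by (rule continuous_on_subset) auto
    then have y_lim: "(y \<longlongrightarrow> y T) (at_left T)"
      using T by (simp add: continuous_on_def at_within_Icc_at_left[OF T, symmetric])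
    have flow_lim: "(flow_line z \<longlongrightarrow> flow_line z T) (at_left T)"
      using continuous_on_flow_line[of UNIV z] by (simp add: continuous_on_def filterlim_at_split)
    have "flow_line z s = y s" if "s \<in> {0<..<T}" for s
      by (rule on_segment[symmetric]) (use before that in auto)
    then have "\<forall>\<^sub>F s in at_left T. flow_line z s = y s"
      using eventually_at_left_real[OF T] by (auto elim: eventually_mono)
    with flow_lim have "(y \<longlongrightarrow> flow_line z T) (at_left T)"
      by (rule Lim_transform_eventually)
    with y_lim have "y T = flow_line z T"
      using tendsto_unique[OF trivial_limit_at_left_real] by blast
    then show "y T \<in> U" using flow_in_U T by simp
  qed
  then have "y ` {0..t} \<subseteq> U" by auto
  then show ?thesis using t by (intro on_segment) auto
qed

lemma flow_line_exit_point:
  assumes g_cont: "continuous_on (closure U) g" and T: "0 < T"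
    and before: "\<And>t. t \<in> {0..<T} \<Longrightarrow> flow_line z t \<in> U"
  shows "flow_line z T \<in> closure U" and "g (flow_line z T) = exp (- T) *\<^sub>R g z"
proof -
  have lim: "(flow_line z \<longlongrightarrow> flow_line z T) (at_left T)"
    using continuous_on_flow_line[of UNIV z] by (simp add: continuous_on_def filterlim_at_split)
  have in_closure: "flow_line z t \<in> closure U" if "t \<in> {0..<T}" for t
    using before[OF that] closure_subset by blast
  have ev: "\<forall>\<^sub>F t in at_left T. t \<in> {0..<T} \<and> flow_line z t \<in> closure U"
    using eventually_at_left_real[OF T] by eventually_elim (simp add: in_closure)
  show cl: "flow_line z T \<in> closure U"
    by (rule Lim_in_closed_set[OF closed_closure _ trivial_limit_at_left_real lim])
      (use ev in \<open>auto elim: eventually_mono\<close>)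
  have g_before: "g (flow_line z t) = exp (- t) *\<^sub>R g z" if "t \<in> {0..<T}" for t
    using that by (intro g_along_flow_line[of z t]) (auto intro: before)
  have "((\<lambda>t. g (flow_line z t)) \<longlongrightarrow> g (flow_line z T)) (at_left T)"
    by (rule continuous_on_tendsto_compose[OF g_cont lim cl]) (use ev in \<open>auto elim: eventually_mono\<close>)
  moreover have "\<forall>\<^sub>F t in at_left T. g (flow_line z t) = exp (- t) *\<^sub>R g z"
    using ev by (auto simp: g_before elim: eventually_mono)
  ultimately have "((\<lambda>t. exp (- t) *\<^sub>R g z) \<longlongrightarrow> g (flow_line z T)) (at_left T)"
    by (rule Lim_transform_eventually)
  moreover have "((\<lambda>t. exp (- t) *\<^sub>R g z) \<longlongrightarrow> exp (- T) *\<^sub>R g z) (at_left T)"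
    by (intro tendsto_intros)
  ultimately show "g (flow_line z T) = exp (- T) *\<^sub>R g z"
    using tendsto_unique[OF trivial_limit_at_left_real] by blast
qed

lemma flow_line_stays_in_ballunion:
  assumes U: "U = ballunion \<zeta> N ys" and g_cont: "continuous_on (closure U) g"
    and outward: "\<And>x i. x \<in> frontier U \<Longrightarrow> i \<in> {1..N} \<Longrightarrow> dist x (ys i) = \<zeta> / 2 \<Longrightarrow>
      g x \<bullet> (x - ys i) > 0"
    and "z \<in> U" "0 \<le> t"
  shows "flow_line z t \<in> U"
proof (rule continuous_stays_in_open[OF continuous_on_flow_line open_U _ _ \<open>0 \<le> t\<close>])
  show "flow_line z 0 \<in> U" using \<open>z \<in> U\<close> by simp
  fix T :: real assume T: "0 < T" and before: "\<And>t. t \<in> {0..<T} \<Longrightarrow> flow_line z t \<in> U"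
  define p where "p = flow_line z T"
  have "p \<in> closure U" and g_p: "g p = exp (- T) *\<^sub>R g z"
    unfolding p_def using flow_line_exit_point[OF g_cont T before] by auto
  show "p \<in> U"
  proof (rule ccontr)
    assume "p \<notin> U"
    then have "p \<in> frontier U" using \<open>p \<in> closure U\<close> open_U by (simp add: frontier_def interior_open)
    (* near the balls whose sphere contains p because g z points outward there,
       near the others by continuity *)
    have away: "\<forall>\<^sub>F t in at_left T. flow_line z t \<notin> ball (ys i) (\<zeta> / 2)" if i: "i \<in> {1..N}" for i
    proof -
      have outside: "\<forall>\<^sub>F s in at_right 0. p + s *\<^sub>R g z \<notin> ball (ys i) (\<zeta> / 2)"
      proof (rule eventually_shift_outside_ball)
        show "p \<notin> ball (ys i) (\<zeta> / 2)" using \<open>p \<notin> U\<close> i by (simp add: U ballunion_def)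
        assume "dist (ys i) p = \<zeta> / 2"
        then have "0 < g p \<bullet> (p - ys i)"
          using outward[OF \<open>p \<in> frontier U\<close> i] by (simp add: dist_commute)
        then show "0 < g z \<bullet> (p - ys i)" by (simp add: g_p zero_less_mult_iff)
      qed
      have shift: "flow_line z t = p + (exp (- t) - exp (- T)) *\<^sub>R g z" for t
        by (simp add: p_def flow_line_def algebra_simps)
      show ?thesis
        unfolding shift using eventually_compose_filterlim[OF outside filterlim_exp_minus_diff_at_left] by simp
    qed
    have "\<forall>\<^sub>F t in at_left T. \<forall>i\<in>{1..N}. flow_line z t \<notin> ball (ys i) (\<zeta> / 2)"
      using away by (intro eventually_ball_finite) auto
    moreover have "\<forall>\<^sub>F t in at_left T. flow_line z t \<in> U"
      using eventually_at_left_real[OF T] by eventually_elim (simp add: before)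
    ultimately have "\<forall>\<^sub>F t in at_left T. False"
      by eventually_elim (auto simp: U ballunion_def)
    then show False by (simp add: trivial_limit_at_left_real)
  qed
qed

end

lemma classD_eikonal_field:
  fixes ys :: "nat \<Rightarrow> 'a::euclidean_space"
  assumes "2 \<le> \<beta>" and "classD \<zeta> \<beta> N ys \<eta>"
  defines "U \<equiv> ballunion \<zeta> N ys"
  obtains g Dg where "eikonal_field U g Dg" and "continuous_on (closure U) g"
    and "\<And>x. x \<in> closure U \<Longrightarrow> ext_grad U \<eta> x = g x"
    and "\<And>x i. x \<in> frontier U \<Longrightarrow> i \<in> {1..N} \<Longrightarrow> dist x (ys i) = \<zeta> / 2 \<Longrightarrow>
      g x \<bullet> (x - ys i) > 0"
proof -
  have open_U: "open U" by (auto simp: U_def ballunion_def)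
  from assms(2) have C: "Ck_closure \<beta> U \<eta>"
    and eikonal: "\<And>x. x \<in> U \<Longrightarrow> (norm (ext_grad U \<eta> x))\<^sup>2 = 2 * \<eta> x"
    and "\<exists>\<delta>>0. \<forall>x\<in>frontier U. \<forall>i\<in>{1..N}. dist x (ys i) = \<zeta> / 2 \<longrightarrow>
      ext_grad U \<eta> x \<bullet> ((x - ys i) /\<^sub>R norm (x - ys i)) > \<delta>"
    unfolding classD_def U_def by blast+
  then have outward_normal: "\<And>x i. x \<in> frontier U \<Longrightarrow> i \<in> {1..N} \<Longrightarrow> dist x (ys i) = \<zeta> / 2 \<Longrightarrow>
      ext_grad U \<eta> x \<bullet> ((x - ys i) /\<^sub>R norm (x - ys i)) > 0"
    by force
  obtain g Dg where grad: "\<And>q. q \<in> U \<Longrightarrow> (\<eta> has_derivative (\<lambda>h. g q \<bullet> h)) (at q)"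
    and g_deriv: "\<And>q. q \<in> U \<Longrightarrow> (g has_derivative Dg q) (at q)"
    and Dg_cont: "\<And>h. continuous_on U (\<lambda>q. Dg q h)"
    and g_cont: "continuous_on (closure U) g"
    using Ck_closure_second_derivative[OF C assms(1) open_U] by blast
  have ext: "\<And>x. x \<in> closure U \<Longrightarrow> ext_grad U \<eta> x = g x"
    using ext_grad_eq_continuous_gradient[OF open_U grad g_cont] by blast
  have "g p \<bullet> g p = 2 * \<eta> p" if "p \<in> U" for p
    using eikonal[OF that] ext[OF subsetD[OF closure_subset that]] by (simp add: power2_norm_eq_inner)
  then have "eikonal_field U g Dg"
    using open_U g_deriv Dg_cont eikonal_hessian_fixes_gradient[OF grad open_U _ g_deriv]
    by unfold_locales auto
  moreover have "g x \<bullet> (x - ys i) > 0"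
    if x: "x \<in> frontier U" "i \<in> {1..N}" "dist x (ys i) = \<zeta> / 2" for x i
  proof -
    have "ext_grad U \<eta> x = g x" using x by (simp add: ext frontier_def)
    then show ?thesis using outward_normal[OF x] by (simp add: zero_less_mult_iff)
  qed
  ultimately show thesis using that g_cont ext by blast
qed

theorem lemmaD2:
  fixes \<zeta> :: real and \<beta> N :: nat and ys :: "nat \<Rightarrow> 'a::euclidean_space"
    and \<eta> :: "'a \<Rightarrow> real" and x0 :: 'a
  assumes "\<zeta> > 0" and "\<beta> \<ge> 2"
    and "classD \<zeta> \<beta> N ys \<eta>"
    and "x0 \<in> ballunion \<zeta> N ys"
  shows "\<exists>x. neg_grad_flow_sol (ballunion \<zeta> N ys) \<eta> x0 x \<and>
             (\<forall>y. neg_grad_flow_sol (ballunion \<zeta> N ys) \<eta> x0 y \<longrightarrow> (\<forall>t\<ge>0. y t = x t)) \<and>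
             (\<forall>t\<ge>0. x t \<in> ballunion \<zeta> N ys)"
proof -
  let ?U = "ballunion \<zeta> N ys"
  obtain g Dg where "eikonal_field ?U g Dg" and g_cont: "continuous_on (closure ?U) g"
    and ext: "\<And>x. x \<in> closure ?U \<Longrightarrow> ext_grad ?U \<eta> x = g x"
    and outward: "\<And>x i. x \<in> frontier ?U \<Longrightarrow> i \<in> {1..N} \<Longrightarrow> dist x (ys i) = \<zeta> / 2 \<Longrightarrow>
      g x \<bullet> (x - ys i) > 0"
    using classD_eikonal_field[OF assms(2,3)] by blast
  then interpret eikonal_field ?U g Dg by simp
  have ext_U: "\<And>x. x \<in> ?U \<Longrightarrow> ext_grad ?U \<eta> x = g x" using ext closure_subset by blast
  have stays: "flow_line x0 t \<in> ?U" if "0 \<le> t" for t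
    using flow_line_stays_in_ballunion[OF refl g_cont outward assms(4) that] .
  have "neg_grad_flow_sol ?U \<eta> x0 (flow_line x0)"
    unfolding neg_grad_flow_sol_def
    using stays closure_subset by (auto simp: ext_U flow_line_solves_flow[OF stays])
  moreover have "y t = flow_line x0 t" if "neg_grad_flow_sol ?U \<eta> x0 y" "0 \<le> t" for y t
    using that unfolding neg_grad_flow_sol_def
    by (intro solution_eq_flow_line[where G = "ext_grad ?U \<eta>"]) (auto simp: ext_U stays)
  ultimately show ?thesis using stays by blast
qed

end
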